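(* Let $m,r$ be positive integers, let $W\in\mathbb{R}^{m\times m}$ be a fixed real symmetric matrix, $\lambda\ge 0$, $L\ge 1$, and $0<\eta\le 1/L$. Let $F(W,U):=\frac{1}{2}\|W-UU^{T}\|_{F}^{2}$ for $U\in\mathbb{R}^{m\times r}$, so that $\nabla_{U}F(W,U)=2(UU^{T}-W)U$, and let \[ \psi(U):= \frac{3}{2}\|U\|_{F}^{4}+\|W\|_{F}\|U\|_{F}^{2},\qquad \nabla\psi(U)=6\|U\|_F^2U+2\|W\|_F U. \] Given $\bar{U}\in\mathbb{R}^{m\times r}$, let \[ U^{+}=\mathrm{arg\,min}_{U\in\mathbb{R}^{m\times r}}\ \frac{\lambda}{2}\|U\|_{F}^{2} +\langle \nabla_{U}F(W,\bar{U}),U-\bar{U}\rangle +\frac{1}{\eta} D_{\psi}(U,\bar{U}). \] Set $G:=\nabla\psi(\bar{U})-\eta\nabla_{U}F(W,\bar{U})$. Then \[ U^{+}=\frac{1}{t}\,G, \] where $t\ge 0$ satisfies $t^{3}-(\lambda\eta+2\|W\|_{F})t^{2}-6\|G\|_{F}^{2}=0$.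
   Context: $\|\cdot\|_F$ is the Frobenius norm and $\langle Y_1,Y_2\rangle:=\mathrm{tr}(Y_1^{T}Y_2)$. The Bregman distance of $\psi$ is $D_{\psi}(X,Y):=\psi(X)-\psi(Y)-\langle\nabla\psi(Y),X-Y\rangle$. In the paper, $W=W^{k+1}$ and $\bar{U}=\bar{U}^{k}$ are current iterates of an alternating algorithm, $U^{+}=U^{k+1}$, $G=G^{k}$, and $t=t_k$. *)

theory Defs
  imports "HOL-Analysis.Analysis"
begin

definition frob_norm :: "real^'n^'m \<Rightarrow> real" where
  "frob_norm A = sqrt (\<Sum>i\<in>UNIV. \<Sum>j\<in>UNIV. (A $ i $ j)^2)"

definition frob_inner :: "real^'n^'m \<Rightarrow> real^'n^'m \<Rightarrow> real" where
  "frob_inner Y1 Y2 = trace (transpose Y1 ** Y2)"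

definition bregman :: "(real^'n^'m \<Rightarrow> real) \<Rightarrow> (real^'n^'m \<Rightarrow> real^'n^'m) \<Rightarrow> real^'n^'m \<Rightarrow> real^'n^'m \<Rightarrow> real" where
  "bregman psi gpsi X Y = psi X - psi Y - frob_inner (gpsi Y) (X - Y)"

definition Fobj :: "real^'m^'m \<Rightarrow> real^'r^'m \<Rightarrow> real" where
  "Fobj W U = (1/2) * (frob_norm (W - U ** transpose U))^2"

definition gradF :: "real^'m^'m \<Rightarrow> real^'r^'m \<Rightarrow> real^'r^'m" where
  "gradF W U = 2 *\<^sub>R ((U ** transpose U - W) ** U)"

definition psi :: "real^'m^'m \<Rightarrow> real^'r^'m \<Rightarrow> real" where
  "psi W U = (3/2) * (frob_norm U)^4 + frob_norm W * (frob_norm U)^2"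

definition grad_psi :: "real^'m^'m \<Rightarrow> real^'r^'m \<Rightarrow> real^'r^'m" where
  "grad_psi W U = (6 * (frob_norm U)^2) *\<^sub>R U + (2 * frob_norm W) *\<^sub>R U"

definition subprob :: "real \<Rightarrow> real \<Rightarrow> real^'m^'m \<Rightarrow> real^'r^'m \<Rightarrow> real^'r^'m \<Rightarrow> real" where
  "subprob lam eta W Ubar U =
     (lam/2) * (frob_norm U)^2 + frob_inner (gradF W Ubar) (U - Ubar)
     + (1/eta) * bregman (psi W) (grad_psi W) U Ubar"

end

theory Submission
  imports Defs
begin

text \<open>Multiplied by \<open>\<eta>\<close>, the subproblem objective is, up to an additive constant,
  \<open>\<phi>(U) = 3/2 \<parallel>U\<parallel>\<^sup>4 + c/2 \<parallel>U\<parallel>\<^sup>2 - \<langle>G,U\<rangle>\<close> with \<open>c = \<lambda>\<eta> + 2\<parallel>W\<parallel>\<close>.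
  If \<open>G = (6\<parallel>V\<parallel>\<^sup>2 + c) V\<close> then
  \<open>\<phi>(U) - \<phi>(V) = 3/2 (\<parallel>U\<parallel>\<^sup>2 - \<parallel>V\<parallel>\<^sup>2)\<^sup>2 + (3\<parallel>V\<parallel>\<^sup>2 + c/2) \<parallel>U - V\<parallel>\<^sup>2\<close>,
  so \<open>V\<close> is the unique minimiser of \<open>\<phi>\<close>; the cubic equation for \<open>t\<close> says precisely that
  \<open>V = G/t\<close> satisfies this fixed-point condition.\<close>

lemma frob_norm_eq_norm: "frob_norm (A::real^'n^'m) = norm A"
  unfolding frob_norm_def norm_eq_sqrt_inner inner_vec_def
  by (simp add: power2_eq_square)

lemma frob_inner_eq_inner: "frob_inner (A::real^'n^'m) B = inner A B"
proof -
  have "frob_inner A B = (\<Sum>i\<in>UNIV. \<Sum>k\<in>UNIV. A$k$i * B$k$i)"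
    unfolding frob_inner_def trace_def matrix_matrix_mult_def transpose_def by simp
  also have "\<dots> = (\<Sum>k\<in>UNIV. \<Sum>i\<in>UNIV. A$k$i * B$k$i)" by (rule sum.swap)
  also have "\<dots> = inner A B" by (simp add: inner_vec_def)
  finally show ?thesis .
qed

definition quartic_potential :: "real \<Rightarrow> 'a::real_inner \<Rightarrow> 'a \<Rightarrow> real" where
  "quartic_potential c G U = (3/2) * norm U ^ 4 + (c/2) * norm U ^ 2 - inner G U"

lemma quartic_potential_diff:
  fixes G U V :: "'a::real_inner"
  assumes "G = (6 * (norm V)^2 + c) *\<^sub>R V"
  shows "quartic_potential c G U - quartic_potential c G V
     = (3/2) * (norm U^2 - norm V^2)^2 + (3 * norm V^2 + c/2) * norm (U - V)^2"
proof -
  have "norm (U - V)^2 = norm U^2 - 2 * inner U V + norm V^2"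
    by (simp add: power2_norm_eq_inner inner_diff_left inner_diff_right inner_commute)
  moreover have "inner G U = (6 * norm V^2 + c) * inner U V"
    using assms by (simp add: inner_commute)
  moreover have "inner G V = (6 * norm V^2 + c) * norm V^2"
    using assms by (simp add: power2_norm_eq_inner)
  ultimately show ?thesis
    unfolding quartic_potential_def by (simp only:) (simp add: eval_nat_numeral algebra_simps)
qed

lemma quartic_potential_minimizer_unique:
  fixes G U V :: "'a::real_inner"
  assumes c: "c \<ge> 0" and G: "G = (6 * (norm V)^2 + c) *\<^sub>R V"
    and le: "quartic_potential c G U \<le> quartic_potential c G V"
  shows "U = V"
proof -
  have sum_le: "(3/2) * (norm U^2 - norm V^2)^2 + (3 * norm V^2 + c/2) * norm (U - V)^2 \<le> 0"
    using le quartic_potential_diff[OF G, of U] by simp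
  have "(3 * norm V^2 + c/2) * norm (U - V)^2 \<ge> 0" using c by simp
  then have "(norm U^2 - norm V^2)^2 \<le> 0" using sum_le by linarith
  then have "norm U^2 = norm V^2" by simp
  then have norms: "norm U = norm V" by (simp add: power2_eq_iff_nonneg)
  show ?thesis
  proof (cases "V = 0")
    case True
    then show ?thesis using norms by simp
  next
    case False
    then have "3 * norm V^2 + c/2 > 0" using c by (simp add: add_pos_nonneg)
    moreover have "(3 * norm V^2 + c/2) * norm (U - V)^2 \<le> 0"
      using sum_le zero_le_power2[of "norm U^2 - norm V^2"] by linarith
    ultimately have "norm (U - V)^2 \<le> 0" by (simp add: mult_le_0_iff)
    then show ?thesis by simp
  qed
qed

lemma cubic_root_fixed_point:
  fixes G :: "'a::real_normed_vector"
  assumes c: "c \<ge> 0" and t: "t \<ge> 0" and root: "t^3 - c * t^2 - 6 * (norm G)^2 = 0"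
  shows "G = (6 * (norm ((1/t) *\<^sub>R G))^2 + c) *\<^sub>R ((1/t) *\<^sub>R G)"
proof (cases "G = 0")
  case False
  with root t have tpos: "t > 0" by (cases "t = 0") auto
  have "t^2 * (t - c) = 6 * norm G^2"
    using root by (simp add: power2_eq_square power3_eq_cube algebra_simps)
  then have "t = 6 * (norm G / t)^2 + c"
    using tpos by (simp add: field_simps power_divide)
  then show ?thesis using tpos by (simp add: divide_inverse_commute)
qed simp

lemma cubic_has_nonneg_root:
  fixes c d :: real
  assumes c: "c \<ge> 0" and d: "d \<ge> 0"
  shows "\<exists>t\<ge>0. t^3 - c * t^2 - d = 0"
proof -
  define p where "p t = t^3 - c * t^2 - d" for t :: real
  define T where "T = c + d + 1"
  have "1 \<le> T^2" using c d by (simp add: T_def one_le_power)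
  then have "T - c \<le> T^2 * (T - c)" using c d by (simp add: T_def)
  then have pT: "p T \<ge> 0"
    unfolding p_def by (simp add: T_def power2_eq_square power3_eq_cube algebra_simps)
  have "\<exists>t\<ge>0. t \<le> T \<and> p t = 0"
    by (rule IVT[of p 0 0 T]) (use pT c d in \<open>auto simp: p_def[abs_def] T_def intro!: continuous_intros\<close>)
  then show ?thesis unfolding p_def by auto
qed

lemma scaled_subprob_eq_quartic_potential:
  fixes W :: "real^'m^'m" and Ubar U :: "real^'r^'m"
  assumes "eta > 0"
  shows "eta * subprob lam eta W Ubar U
    = quartic_potential (lam * eta + 2 * norm W) (grad_psi W Ubar - eta *\<^sub>R gradF W Ubar) U
      + (inner (grad_psi W Ubar) Ubar - psi W Ubar - eta * inner (gradF W Ubar) Ubar)"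
  unfolding subprob_def bregman_def quartic_potential_def frob_inner_eq_inner
  using assms by (simp add: psi_def frob_norm_eq_norm inner_diff_left inner_diff_right)
    (simp add: field_simps)

theorem proposition2:
  fixes W :: "real^'m^'m" and Ubar Uplus :: "real^'r^'m"
    and lam L eta :: real
  assumes symW: "transpose W = W"
    and lam: "lam \<ge> 0" and L: "L \<ge> 1"
    and eta_pos: "0 < eta" and eta_le: "eta \<le> 1 / L"
    and argmin: "\<forall>U :: real^'r^'m. subprob lam eta W Ubar Uplus \<le> subprob lam eta W Ubar U"
  shows "let G = grad_psi W Ubar - eta *\<^sub>R gradF W Ubar in
           (\<exists>t \<ge> 0. t^3 - (lam * eta + 2 * frob_norm W) * t^2 - 6 * (frob_norm G)^2 = 0) \<and>
           (\<forall>t \<ge> 0. t^3 - (lam * eta + 2 * frob_norm W) * t^2 - 6 * (frob_norm G)^2 = 0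
                 \<longrightarrow> Uplus = (1 / t) *\<^sub>R G)"
proof -
  define G where "G = grad_psi W Ubar - eta *\<^sub>R gradF W Ubar"
  define c where "c = lam * eta + 2 * norm W"
  have c: "c \<ge> 0" unfolding c_def using lam eta_pos by simp
  have min: "quartic_potential c G Uplus \<le> quartic_potential c G U" for U
    using argmin eta_pos scaled_subprob_eq_quartic_potential[OF eta_pos, of lam W Ubar]
    unfolding c_def G_def by (metis add_le_cancel_right mult_le_cancel_left_pos)
  have "Uplus = (1/t) *\<^sub>R G" if "t \<ge> 0" "t^3 - c * t^2 - 6 * (norm G)^2 = 0" for t
    using quartic_potential_minimizer_unique[OF c cubic_root_fixed_point[OF c that] min] .
  moreover have "\<exists>t\<ge>0. t^3 - c * t^2 - 6 * (norm G)^2 = 0"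
    using cubic_has_nonneg_root[OF c] by simp
  ultimately show ?thesis
    unfolding Let_def G_def[symmetric] frob_norm_eq_norm c_def[symmetric] by blast
qed

end
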